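(* Let $G=B_{n_0,\dots,n_g}$ be a banana graph of genus $g\ge2$, consider the twice-marked graph $(G,u,v)=(G,v_{0,0},v_{0,n_0})$ with torsion order $k$, and let $D=g\,v_{0,n_0}$. If $D$ is submodular, then $\tau^{u,v}_D(b)=g-b$ for all $0\le b\le g$; consequently $k\ge g$ and $\mathrm{inv}_k(\tau^{u,v}_D)\ge\binom{g+1}{2}$.
   Context: A graph is a finite, connected, loopless multigraph (parallel edges allowed); its genus is $g=|E(G)|-|V(G)|+1$. A divisor is an element of the free abelian group on $V(G)$. Linear equivalence $\sim$ is generated by chip-firing (firing $w$ subtracts $\mathrm{val}(w)$ chips from $w$ and adds to each other vertex the number of edges joining it to $w$). The rank $r(D)$ is $-1$ if $D$ is not equivalent to an effective divisor, else the largest $r\ge0$ such that $D-E$ is equivalent to an effective divisor for every effective $E$ of degree $r$. $\delta(P)$ is $1$ if $P$ holds and $0$ otherwise. A twice-marked graph $(G,u,v)$ is a graph with two chosen vertices; its torsion order is the least $k\ge1$ with $ku\sim kv$. A twist of $D$ is $D+au+bv$. $\Delta(D)=r(D)-r(D-u)-r(D-v)+r(D-u-v)$. $D$ is submodular if $\Delta(D')\ge0$ for all twists $D'$. If $D$ is submodular, its transmission permutation $\tau^{u,v}_D$ is the unique bijection $\mathbb Z\to\mathbb Z$ with $\delta(\tau^{u,v}_D(b)=a)=\Delta(D+au-bv)$ for all $a,b$; it satisfies $\tau^{u,v}_D(n+k)=\tau^{u,v}_D(n)+k$ when $ku\sim kv$. An inversion of a bijection $\tau$ is a pair $(a,b)$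 with $a<b$, $\tau(a)>\tau(b)$; two inversions $(a,b),(a',b')$ are $k$-equivalent if $a-a'=b-b'\equiv0\pmod k$; $\mathrm{inv}_k(\tau)$ is the number of classes. For positive integers $n_0,\dots,n_g$, the banana graph $B_{n_0,\dots,n_g}$ is obtained by joining two vertices by $g+1$ internally disjoint paths of lengths $n_0,\dots,n_g$; it has genus $g$. Its vertices are labelled $v_{\alpha,i}$ ($0\le\alpha\le g$, $0\le i\le n_\alpha$), with $v_{\alpha,i}$ at distance $i$ from $v_{0,0}$ along the $\alpha$-th path; $v_{0,0}$ and $v_{0,n_0}$ are the two multivalent vertices. *)

theory Defs
  imports Main
begin

text \<open>A multigraph is given by a finite vertex set V and a symmetric edge-multiplicity
function m (m x y = number of edges joining x and y). Divisors are integer-valued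
functions; only their values on V matter.\<close>

definition ind :: "'v \<Rightarrow> 'v \<Rightarrow> int" where
  "ind w x = (if x = w then 1 else 0)"

definition effective :: "'v set \<Rightarrow> ('v \<Rightarrow> int) \<Rightarrow> bool" where
  "effective V D \<longleftrightarrow> (\<forall>x\<in>V. D x \<ge> 0)"

definition degree :: "'v set \<Rightarrow> ('v \<Rightarrow> int) \<Rightarrow> int" where
  "degree V D = (\<Sum>x\<in>V. D x)"

text \<open>Linear equivalence: D' is obtained from D by firing each vertex w exactly f w times
(negative = borrowing). Firing w removes val(w) chips from w and gives m x w chips to x.\<close>
definition lin_equiv :: "'v set \<Rightarrow> ('v \<Rightarrow> 'v \<Rightarrow> nat) \<Rightarrow> ('v \<Rightarrow> int) \<Rightarrow> ('v \<Rightarrow> int) \<Rightarrow> bool" where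
  "lin_equiv V m D D' \<longleftrightarrow>
     (\<exists>f :: 'v \<Rightarrow> int. \<forall>x\<in>V. D' x = D x - (\<Sum>y\<in>V. int (m x y) * (f x - f y)))"

definition rank :: "'v set \<Rightarrow> ('v \<Rightarrow> 'v \<Rightarrow> nat) \<Rightarrow> ('v \<Rightarrow> int) \<Rightarrow> int" where
  "rank V m D =
     (if \<not> (\<exists>F. effective V F \<and> lin_equiv V m D F) then -1
      else int (GREATEST r::nat. \<forall>E. effective V E \<and> degree V E = int r \<longrightarrow>
                 (\<exists>F. effective V F \<and> lin_equiv V m (\<lambda>x. D x - E x) F)))"

definition torsion_order :: "'v set \<Rightarrow> ('v \<Rightarrow> 'v \<Rightarrow> nat) \<Rightarrow> 'v \<Rightarrow> 'v \<Rightarrow> nat" where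
  "torsion_order V m u v =
     (LEAST k::nat. k \<ge> 1 \<and> lin_equiv V m (\<lambda>x. int k * ind u x) (\<lambda>x. int k * ind v x))"

definition twist :: "'v \<Rightarrow> 'v \<Rightarrow> ('v \<Rightarrow> int) \<Rightarrow> int \<Rightarrow> int \<Rightarrow> ('v \<Rightarrow> int)" where
  "twist u v D a b = (\<lambda>x. D x + a * ind u x + b * ind v x)"

definition Delta :: "'v set \<Rightarrow> ('v \<Rightarrow> 'v \<Rightarrow> nat) \<Rightarrow> 'v \<Rightarrow> 'v \<Rightarrow> ('v \<Rightarrow> int) \<Rightarrow> int" where
  "Delta V m u v D = rank V m D - rank V m (twist u v D (-1) 0) - rank V m (twist u v D 0 (-1))
                     + rank V m (twist u v D (-1) (-1))"

definition submodular :: "'v set \<Rightarrow> ('v \<Rightarrow> 'v \<Rightarrow> nat) \<Rightarrow> 'v \<Rightarrow> 'v \<Rightarrow> ('v \<Rightarrow> int) \<Rightarrow> bool" where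
  "submodular V m u v D \<longleftrightarrow> (\<forall>a b. Delta V m u v (twist u v D a b) \<ge> 0)"

definition trans_perm :: "'v set \<Rightarrow> ('v \<Rightarrow> 'v \<Rightarrow> nat) \<Rightarrow> 'v \<Rightarrow> 'v \<Rightarrow> ('v \<Rightarrow> int) \<Rightarrow> int \<Rightarrow> int" where
  "trans_perm V m u v D = (THE \<tau>. bij \<tau> \<and>
      (\<forall>a b. Delta V m u v (twist u v D a (-b)) = (if \<tau> b = a then 1 else 0)))"

definition inversions :: "(int \<Rightarrow> int) \<Rightarrow> (int \<times> int) set" where
  "inversions \<tau> = {(a, b). a < b \<and> \<tau> a > \<tau> b}"

definition k_equiv :: "nat \<Rightarrow> (int \<Rightarrow> int) \<Rightarrow> ((int \<times> int) \<times> (int \<times> int)) set" where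
  "k_equiv k \<tau> = {((a, b), (a', b')). (a, b) \<in> inversions \<tau> \<and> (a', b') \<in> inversions \<tau> \<and>
                     a - a' = b - b' \<and> int k dvd (a - a')}"

definition inv_k :: "nat \<Rightarrow> (int \<Rightarrow> int) \<Rightarrow> nat" where
  "inv_k k \<tau> = card (inversions \<tau> // k_equiv k \<tau>)"

text \<open>Vertex v_{alpha,i} of B_{n_0..n_g}; canonical representatives: (0,i) for 0<=i<=n_0
 (so v_{alpha,0} = (0,0) and v_{alpha,n_alpha} = (0,n_0)), and (alpha,i) for internal vertices.\<close>
definition banana_vert :: "(nat \<Rightarrow> nat) \<Rightarrow> nat \<Rightarrow> nat \<Rightarrow> nat \<times> nat" where
  "banana_vert ns \<alpha> i = (if i = 0 then (0, 0) else if i = ns \<alpha> then (0, ns 0) else (\<alpha>, i))"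

definition banana_V :: "nat \<Rightarrow> (nat \<Rightarrow> nat) \<Rightarrow> (nat \<times> nat) set" where
  "banana_V g ns = {banana_vert ns \<alpha> i | \<alpha> i. \<alpha> \<le> g \<and> i \<le> ns \<alpha>}"

definition banana_m :: "nat \<Rightarrow> (nat \<Rightarrow> nat) \<Rightarrow> nat \<times> nat \<Rightarrow> nat \<times> nat \<Rightarrow> nat" where
  "banana_m g ns x y = card {(\<alpha>, i). \<alpha> \<le> g \<and> i < ns \<alpha> \<and>
       {banana_vert ns \<alpha> i, banana_vert ns \<alpha> (Suc i)} = {x, y}}"

end

theory Submission
  imports Defs
begin

text \<open>For a submodular D the function \<Delta> is a 0/1 table with exactly one 1 in each row and
column, because the rank changes by at most 1 when a chip is removed, is invariant under the
torsion shift (a, b) \<mapsto> (a + k, b + k), is -1 in negative degree and grows like the degree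
in large degree; this table is the transmission permutation \<tau>.

On the banana graph every vertex x has a mirror x' (reflect its path) with u + v \<sim> x + x',
so any effective divisor of degree c can be subtracted from c(u + v) and r(c(u + v)) \<ge> c.
Dhar's burning algorithm shows that c v - u and c u - v are not equivalent to effective
divisors for c \<le> g, whence r((c-1)u + cv) and r(cu + (c-1)v) are at most c - 1. For D = g v
the twist D + (g-b)u - bv equals (g-b)(u + v), so these bounds give \<Delta>(D + (g-b)u - bv) \<ge> 1,
i.e. \<tau>(b) = g - b. Since \<tau>(b + k) = \<tau>(b) + k, this reversal of [0, g] forces k > g, and
then the pairs 0 \<le> a < b \<le> g are inversions lying in pairwise different k-classes.\<close>

section \<open>Principal divisors and rank\<close>

definition laplacian :: "'v set \<Rightarrow> ('v \<Rightarrow> 'v \<Rightarrow> nat) \<Rightarrow> ('v \<Rightarrow> int) \<Rightarrow> 'v \<Rightarrow> int" where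
  "laplacian V m f x = (\<Sum>y\<in>V. int (m x y) * (f x - f y))"

definition principal :: "'v set \<Rightarrow> ('v \<Rightarrow> 'v \<Rightarrow> nat) \<Rightarrow> ('v \<Rightarrow> int) \<Rightarrow> bool" where
  "principal V m h \<longleftrightarrow> (\<exists>f. \<forall>x\<in>V. h x = laplacian V m f x)"

lemma lin_equiv_iff_principal: "lin_equiv V m D D' \<longleftrightarrow> principal V m (\<lambda>x. D x - D' x)"
  unfolding lin_equiv_def principal_def laplacian_def
  by (intro ex_cong1 ball_cong) auto

lemma laplacian_lincomb:
  "laplacian V m (\<lambda>x. a * f x + b * g x) x = a * laplacian V m f x + b * laplacian V m g x"
  unfolding laplacian_def by (simp add: sum_distrib_left sum.distrib[symmetric] algebra_simps)

lemma principal_lincomb: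
  assumes "principal V m h" "principal V m k"
  shows "principal V m (\<lambda>x. a * h x + b * k x)"
proof -
  obtain f1 f2 where "\<forall>x\<in>V. h x = laplacian V m f1 x" "\<forall>x\<in>V. k x = laplacian V m f2 x"
    using assms unfolding principal_def by blast
  then show ?thesis
    unfolding principal_def
    by (intro exI[of _ "\<lambda>x. a * f1 x + b * f2 x"]) (simp add: laplacian_lincomb)
qed

lemma principal_cong: "principal V m h \<Longrightarrow> (\<And>x. x \<in> V \<Longrightarrow> h x = k x) \<Longrightarrow> principal V m k"
  unfolding principal_def by auto

lemma principal_zero: "principal V m (\<lambda>x. 0)"
  unfolding principal_def laplacian_def by (rule exI[of _ "\<lambda>x. 0"]) simp

lemma principal_laplacian: "principal V m (laplacian V m f)"
  unfolding principal_def by auto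

lemma principal_scale: "principal V m h \<Longrightarrow> principal V m (\<lambda>x. c * h x)"
  using principal_lincomb[of V m h h c 0] by simp

lemma principal_lincomb3:
  assumes "principal V m h1" "principal V m h2" "principal V m h3"
    and "\<And>x. x \<in> V \<Longrightarrow> k x = a1 * h1 x + a2 * h2 x + a3 * h3 x"
  shows "principal V m k"
proof -
  have "principal V m (\<lambda>x. a1 * h1 x + a2 * h2 x)" by (rule principal_lincomb[OF assms(1,2)])
  from principal_lincomb[OF this assms(3), of 1 a3] show ?thesis
    by (rule principal_cong) (simp add: assms(4))
qed

lemma principal_sum:
  "finite A \<Longrightarrow> (\<And>i. i \<in> A \<Longrightarrow> principal V m (h i)) \<Longrightarrow> principal V m (\<lambda>x. \<Sum>i\<in>A. h i x)"
proof (induction A rule: finite_induct)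
  case empty then show ?case by (simp add: principal_zero)
next
  case (insert a A)
  have "principal V m (\<lambda>x. 1 * h a x + 1 * (\<Sum>i\<in>A. h i x))"
    by (rule principal_lincomb) (use insert in auto)
  then show ?case using insert by simp
qed

lemma sum_laplacian_eq_0:
  assumes sym: "\<And>x y. m x y = m y x"
  shows "(\<Sum>x\<in>V. laplacian V m f x) = 0"
proof -
  have "(\<Sum>x\<in>V. laplacian V m f x) =
      (\<Sum>x\<in>V. \<Sum>y\<in>V. int (m x y) * f x) - (\<Sum>x\<in>V. \<Sum>y\<in>V. int (m x y) * f y)"
    by (simp add: laplacian_def sum_subtractf right_diff_distrib)
  also have "(\<Sum>x\<in>V. \<Sum>y\<in>V. int (m x y) * f y) = (\<Sum>y\<in>V. \<Sum>x\<in>V. int (m x y) * f y)"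
    by (rule sum.swap)
  also have "\<dots> = (\<Sum>x\<in>V. \<Sum>y\<in>V. int (m x y) * f x)"
    by (simp add: sym)
  finally show ?thesis by simp
qed

lemma sum_scaled_ind: "finite V \<Longrightarrow> w \<in> V \<Longrightarrow> (\<Sum>x\<in>V. c * ind w x) = c"
  by (simp add: ind_def if_distrib sum.delta cong: if_cong)

lemma sum_mult_ind: "finite V \<Longrightarrow> y \<in> V \<Longrightarrow> (\<Sum>x\<in>V. c x * ind x y) = c y"
  by (simp add: ind_def sum.delta' if_distrib cong: if_cong)

lemma degree_diff: "degree V (\<lambda>x. D x - E x) = degree V D - degree V E"
  unfolding degree_def by (simp add: sum_subtractf)

lemma degree_add_ind: "finite V \<Longrightarrow> w \<in> V \<Longrightarrow> degree V (\<lambda>x. E x + ind w x) = degree V E + 1"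
  unfolding degree_def using sum_scaled_ind[of V w 1] by (simp add: sum.distrib)

lemma degree_nonneg_if_effective: "effective V E \<Longrightarrow> 0 \<le> degree V E"
  unfolding effective_def degree_def by (simp add: sum_nonneg)

lemma lin_equiv_cong_left:
  "(\<And>x. x \<in> V \<Longrightarrow> D1 x = D2 x) \<Longrightarrow> lin_equiv V m D1 F = lin_equiv V m D2 F"
  unfolding lin_equiv_def by simp

lemma lin_equiv_add_ind:
  "lin_equiv V m (\<lambda>x. D x - ind w x) F \<Longrightarrow> lin_equiv V m D (\<lambda>x. F x + ind w x)"
  unfolding lin_equiv_iff_principal by (erule principal_cong) simp

lemma effective_add_ind: "effective V F \<Longrightarrow> effective V (\<lambda>x. F x + ind w x)"
  unfolding effective_def ind_def by auto

definition rank_at_least :: "'v set \<Rightarrow> ('v \<Rightarrow> 'v \<Rightarrow> nat) \<Rightarrow> ('v \<Rightarrow> int) \<Rightarrow> nat \<Rightarrow> bool" where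
  "rank_at_least V m D r \<longleftrightarrow> (\<forall>E. effective V E \<and> degree V E = int r \<longrightarrow>
                 (\<exists>F. effective V F \<and> lin_equiv V m (\<lambda>x. D x - E x) F))"

locale multigraph =
  fixes V :: "'v set" and m :: "'v \<Rightarrow> 'v \<Rightarrow> nat"
  assumes finite_V: "finite V" and V_nonempty: "V \<noteq> {}" and m_sym: "\<And>x y. m x y = m y x"
begin

lemma degree_lin_equiv: "lin_equiv V m D D' \<Longrightarrow> degree V D = degree V D'"
proof -
  assume "lin_equiv V m D D'"
  then obtain f where f: "\<forall>x\<in>V. D x - D' x = laplacian V m f x"
    unfolding lin_equiv_iff_principal principal_def by auto
  have "degree V D - degree V D' = (\<Sum>x\<in>V. D x - D' x)"
    by (simp add: degree_def sum_subtractf)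
  also have "\<dots> = (\<Sum>x\<in>V. laplacian V m f x)" by (rule sum.cong) (auto simp: f)
  finally have "degree V D - degree V D' = (\<Sum>x\<in>V. laplacian V m f x)" .
  then show ?thesis using sum_laplacian_eq_0[of m V f] m_sym by simp
qed

lemma rank_at_least_0_iff: "rank_at_least V m D 0 \<longleftrightarrow> (\<exists>F. effective V F \<and> lin_equiv V m D F)"
proof
  assume "rank_at_least V m D 0"
  then have "\<exists>F. effective V F \<and> lin_equiv V m (\<lambda>x. D x - 0) F"
    unfolding rank_at_least_def by (erule_tac x="\<lambda>x. 0" in allE) (simp add: effective_def degree_def)
  then show "\<exists>F. effective V F \<and> lin_equiv V m D F" by simp
next
  assume H: "\<exists>F. effective V F \<and> lin_equiv V m D F"
  show "rank_at_least V m D 0" unfolding rank_at_least_def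
  proof (intro allI impI)
    fix E assume "effective V E \<and> degree V E = int 0"
    then have "\<forall>x\<in>V. E x = 0" using finite_V unfolding effective_def degree_def
      by (subst sum_nonneg_eq_0_iff[symmetric]) auto
    then show "\<exists>F. effective V F \<and> lin_equiv V m (\<lambda>x. D x - E x) F"
      using H lin_equiv_cong_left[of V D "\<lambda>x. D x - E x"] by simp
  qed
qed

lemma effective_chips: "0 \<le> c \<Longrightarrow> effective V (\<lambda>x. c * ind w x)"
  unfolding effective_def ind_def by simp

lemma degree_chips: "w \<in> V \<Longrightarrow> degree V (\<lambda>x. c * ind w x) = c"
  unfolding degree_def using finite_V by (simp add: sum_scaled_ind)

lemma degree_two_chips: "p \<in> V \<Longrightarrow> q \<in> V \<Longrightarrow> degree V (\<lambda>x. a * ind p x + b * ind q x) = a + b"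
  unfolding degree_def using finite_V by (simp add: sum.distrib sum_scaled_ind)

lemma rank_at_least_le_degree: "rank_at_least V m D n \<Longrightarrow> int n \<le> degree V D"
proof -
  assume H: "rank_at_least V m D n"
  obtain w where w: "w \<in> V" using V_nonempty by auto
  from H obtain F where F: "effective V F" "lin_equiv V m (\<lambda>x. D x - int n * ind w x) F"
    unfolding rank_at_least_def using effective_chips[of "int n" w] degree_chips[OF w, of "int n"]
    by fastforce
  have "degree V D - int n = degree V F"
    using degree_lin_equiv[OF F(2)] degree_diff degree_chips[OF w] by metis
  then show ?thesis using degree_nonneg_if_effective[OF F(1)] by simp
qed

lemma rank_at_least_remove_chip:
  assumes w: "w \<in> V" and H: "rank_at_least V m D (Suc n)"
  shows "rank_at_least V m (\<lambda>x. D x - ind w x) n"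
  unfolding rank_at_least_def
proof (intro allI impI)
  fix E assume E: "effective V E \<and> degree V E = int n"
  have "effective V (\<lambda>x. E x + ind w x)" using E unfolding effective_def ind_def by auto
  moreover have "degree V (\<lambda>x. E x + ind w x) = int (Suc n)"
    using E degree_add_ind[OF finite_V w] by simp
  ultimately obtain F where "effective V F" "lin_equiv V m (\<lambda>x. D x - (E x + ind w x)) F"
    using H unfolding rank_at_least_def by blast
  moreover have "lin_equiv V m (\<lambda>x. D x - (E x + ind w x)) F
      = lin_equiv V m (\<lambda>x. D x - ind w x - E x) F"
    by (rule lin_equiv_cong_left) simp
  ultimately show "\<exists>F. effective V F \<and> lin_equiv V m (\<lambda>x. D x - ind w x - E x) F" by auto
qed

lemma rank_at_least_add_chip:
  assumes "rank_at_least V m (\<lambda>x. D x - ind w x) n"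
  shows "rank_at_least V m D n"
  unfolding rank_at_least_def
proof (intro allI impI)
  fix E assume "effective V E \<and> degree V E = int n"
  then obtain F where "effective V F" "lin_equiv V m (\<lambda>x. D x - E x - ind w x) F"
    using assms unfolding rank_at_least_def by (auto simp: algebra_simps)
  then show "\<exists>F. effective V F \<and> lin_equiv V m (\<lambda>x. D x - E x) F"
    using effective_add_ind[of V F w] lin_equiv_add_ind[of V m "\<lambda>x. D x - E x" w F] by auto
qed

lemma rank_at_least_mono: "rank_at_least V m D n \<Longrightarrow> k \<le> n \<Longrightarrow> rank_at_least V m D k"
proof (induction n)
  case (Suc n)
  obtain w where "w \<in> V" using V_nonempty by auto
  then have "rank_at_least V m D n"
    using Suc.prems(1) rank_at_least_remove_chip rank_at_least_add_chip by blast
  then show ?case using Suc by (auto simp: le_Suc_eq)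
qed simp

lemma rank_eq_Greatest:
  "rank V m D = (if rank_at_least V m D 0 then int (GREATEST r. rank_at_least V m D r) else -1)"
  unfolding rank_def rank_at_least_0_iff by (simp add: rank_at_least_def)

lemma rank_ge_iff: "int n \<le> rank V m D \<longleftrightarrow> rank_at_least V m D n"
proof (cases "rank_at_least V m D 0")
  case True
  have bounded: "\<And>y. rank_at_least V m D y \<Longrightarrow> y \<le> nat (degree V D)"
    using rank_at_least_le_degree by fastforce
  have "rank_at_least V m D (GREATEST r. rank_at_least V m D r)"
    by (rule GreatestI_nat[where P="rank_at_least V m D", OF True bounded])
  then have "rank_at_least V m D n \<longleftrightarrow> n \<le> (GREATEST r. rank_at_least V m D r)"
    using Greatest_le_nat[where P="rank_at_least V m D", OF _ bounded] rank_at_least_mono by blast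
  then show ?thesis using True by (simp add: rank_eq_Greatest)
next
  case False
  then show ?thesis using rank_at_least_mono[of D n 0] by (auto simp: rank_eq_Greatest)
qed

lemma rank_lt_if_not_effective:
  assumes w: "w \<in> V" and c: "0 \<le> c"
    and not_eff: "\<not> (\<exists>F. effective V F \<and> lin_equiv V m (\<lambda>x. D x - c * ind w x) F)"
  shows "rank V m D < c"
proof (rule ccontr)
  assume "\<not> rank V m D < c"
  then have "rank_at_least V m D (nat c)" using rank_ge_iff c by (metis int_nat_eq not_less)
  moreover have "effective V (\<lambda>x. c * ind w x) \<and> degree V (\<lambda>x. c * ind w x) = int (nat c)"
    using effective_chips[OF c] degree_chips[OF w] c by simp
  ultimately show False using not_eff unfolding rank_at_least_def by blast
qed

lemma rank_ge_minus_1: "-1 \<le> rank V m D"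
  by (simp add: rank_eq_Greatest)

lemma rank_lin_equiv:
  assumes "lin_equiv V m D D'"
  shows "rank V m D = rank V m D'"
proof -
  have P: "principal V m (\<lambda>x. D x - D' x)" using assms lin_equiv_iff_principal by auto
  have "lin_equiv V m (\<lambda>x. D x - E x) F \<longleftrightarrow> lin_equiv V m (\<lambda>x. D' x - E x) F" for E F
  proof
    assume "lin_equiv V m (\<lambda>x. D x - E x) F"
    from principal_lincomb[OF this[unfolded lin_equiv_iff_principal] P, of 1 "-1"]
    show "lin_equiv V m (\<lambda>x. D' x - E x) F"
      unfolding lin_equiv_iff_principal by (rule principal_cong) simp
  next
    assume "lin_equiv V m (\<lambda>x. D' x - E x) F"
    from principal_lincomb[OF this[unfolded lin_equiv_iff_principal] P, of 1 1]
    show "lin_equiv V m (\<lambda>x. D x - E x) F"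
      unfolding lin_equiv_iff_principal by (rule principal_cong) simp
  qed
  then have "rank_at_least V m D = rank_at_least V m D'"
    unfolding rank_at_least_def by (simp add: fun_eq_iff)
  then show ?thesis by (simp add: rank_eq_Greatest)
qed

lemma rank_remove_chip:
  assumes "w \<in> V"
  shows "rank V m D - 1 \<le> rank V m (\<lambda>x. D x - ind w x) \<and> rank V m (\<lambda>x. D x - ind w x) \<le> rank V m D"
proof
  show "rank V m D - 1 \<le> rank V m (\<lambda>x. D x - ind w x)"
  proof (cases "rank V m D \<le> 0")
    case True then show ?thesis using rank_ge_minus_1[of "\<lambda>x. D x - ind w x"] by simp
  next
    case False
    then obtain n where n: "rank V m D = int (Suc n)"
      by (metis pos_int_cases not_le of_nat_Suc Suc_pred add.commute)
    then have "rank_at_least V m (\<lambda>x. D x - ind w x) n"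
      using rank_ge_iff rank_at_least_remove_chip[OF assms] by (metis order_refl)
    then show ?thesis using n rank_ge_iff by simp
  qed
next
  show "rank V m (\<lambda>x. D x - ind w x) \<le> rank V m D"
  proof (cases "rank V m (\<lambda>x. D x - ind w x) < 0")
    case True then show ?thesis using rank_ge_minus_1[of D] by simp
  next
    case False
    then obtain n where n: "rank V m (\<lambda>x. D x - ind w x) = int n"
      using nonneg_eq_int by (metis not_less)
    then have "rank_at_least V m D n"
      using rank_ge_iff rank_at_least_add_chip by (metis order_refl)
    then show ?thesis using n rank_ge_iff by simp
  qed
qed

lemma rank_negative_degree: "degree V D < 0 \<Longrightarrow> rank V m D = -1"
  using degree_lin_equiv degree_nonneg_if_effective rank_at_least_0_iff
  by (fastforce simp: rank_eq_Greatest)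

lemma rank_ge_degree_minus:
  assumes "\<And>E. C \<le> degree V E \<Longrightarrow> \<exists>F. effective V F \<and> lin_equiv V m E F"
  shows "degree V D - C \<le> rank V m D"
proof (cases "degree V D - C < 0")
  case True then show ?thesis using rank_ge_minus_1[of D] by simp
next
  case False
  have "rank_at_least V m D (nat (degree V D - C))" unfolding rank_at_least_def
  proof (intro allI impI)
    fix E assume "effective V E \<and> degree V E = int (nat (degree V D - C))"
    then have "C \<le> degree V (\<lambda>x. D x - E x)" unfolding degree_diff using False by simp
    then show "\<exists>F. effective V F \<and> lin_equiv V m (\<lambda>x. D x - E x) F" using assms by blast
  qed
  then have "int (nat (degree V D - C)) \<le> rank V m D" using rank_ge_iff by blast
  then show ?thesis using False by simp
qed

lemma sum_edges_leaving_le_laplacian: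
  assumes x: "x \<in> S" and le: "\<And>y. y \<in> V \<Longrightarrow> f y \<le> f x" and lt: "\<And>y. y \<in> V - S \<Longrightarrow> f y < f x"
  shows "(\<Sum>y\<in>V - S. int (m x y)) \<le> laplacian V m f x"
proof -
  have "(\<Sum>y\<in>V - S. int (m x y)) = (\<Sum>y\<in>V. if y \<notin> S then int (m x y) else 0)"
    using finite_V sum.inter_filter[of V "\<lambda>y. int (m x y)" "\<lambda>y. y \<notin> S"] by (simp add: set_diff_eq)
  also have "\<dots> \<le> (\<Sum>y\<in>V. int (m x y) * (f x - f y))"
  proof (rule sum_mono)
    fix y assume y: "y \<in> V"
    show "(if y \<notin> S then int (m x y) else 0) \<le> int (m x y) * (f x - f y)"
    proof (cases "y \<in> S")
      case True then show ?thesis using le[OF y] by simp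
    next
      case False
      then have "1 \<le> f x - f y" using lt y by fastforce
      then show ?thesis using False by (simp add: mult_le_cancel_left1)
    qed
  qed
  finally show ?thesis unfolding laplacian_def .
qed

text \<open>Dhar's burning criterion. The burning set is where the firing script attains its maximum.\<close>

lemma not_effective_if_burning:
  assumes q: "q \<in> V" "D q < 0"
    and burn: "\<And>S. S \<subseteq> V - {q} \<Longrightarrow> S \<noteq> {} \<Longrightarrow> \<exists>x\<in>S. D x < (\<Sum>y\<in>V - S. int (m x y))"
  shows "\<not> (\<exists>F. effective V F \<and> lin_equiv V m D F)"
proof
  assume "\<exists>F. effective V F \<and> lin_equiv V m D F"
  then obtain F f where F: "effective V F" and f: "\<forall>x\<in>V. F x = D x - laplacian V m f x"
    unfolding lin_equiv_def laplacian_def by blast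
  define S where "S = {x\<in>V. f x = Max (f ` V)}"
  have "Max (f ` V) \<in> f ` V" using finite_V V_nonempty by simp
  then have "S \<noteq> {}" unfolding S_def by auto
  have chips_lt: "D x - laplacian V m f x < 0" if "x \<in> S" "D x < (\<Sum>y\<in>V - S. int (m x y))" for x
    using sum_edges_leaving_le_laplacian[of x S f] that finite_V unfolding S_def
    by (fastforce simp: order.strict_iff_order)
  show False
  proof (cases "q \<in> S")
    case True
    have "0 \<le> (\<Sum>y\<in>V - S. int (m q y))" by (simp add: sum_nonneg)
    then have "F q < 0" using chips_lt[OF True] f q by fastforce
    then show False using F q unfolding effective_def by auto
  next
    case False
    then have "S \<subseteq> V - {q}" unfolding S_def by auto
    then obtain x where "x \<in> S" "D x < (\<Sum>y\<in>V - S. int (m x y))" using burn \<open>S \<noteq> {}\<close> by blast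
    then have "F x < 0" using chips_lt f unfolding S_def by auto
    then show False using F \<open>x \<in> S\<close> unfolding S_def effective_def by auto
  qed
qed

lemma laplacian_ind:
  assumes "w \<in> V" "x \<in> V"
  shows "laplacian V m (ind w) x = (if x = w then (\<Sum>y\<in>V. int (m w y)) else 0) - int (m x w)"
proof -
  have "laplacian V m (ind w) x = (\<Sum>y\<in>V. int (m x y) * ind w x) - (\<Sum>y\<in>V. int (m x y) * ind w y)"
    unfolding laplacian_def by (simp add: sum_subtractf right_diff_distrib)
  also have "(\<Sum>y\<in>V. int (m x y) * ind w y) = int (m x w)"
    using finite_V assms by (simp add: ind_def sum.delta' if_distrib cong: if_cong)
  finally have L: "laplacian V m (ind w) x = (\<Sum>y\<in>V. int (m x y) * ind w x) - int (m x w)" .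
  have i1: "ind w w = 1" and i0: "x \<noteq> w \<Longrightarrow> ind w x = 0" by (simp_all add: ind_def)
  show ?thesis using L by (cases "x = w") (simp_all add: i1 i0)
qed

lemma principal_fire:
  assumes "w \<in> V"
  shows "principal V m (\<lambda>x. (if x = w then (\<Sum>y\<in>V. int (m w y)) else 0) - int (m x w))"
  by (rule principal_cong[OF principal_laplacian[of V m "ind w"]]) (simp add: laplacian_ind assms)

lemma principal_scaled_degree_shift:
  assumes u: "u \<in> V" and H: "\<And>x. x \<in> V \<Longrightarrow> principal V m (\<lambda>y. N * (ind x y - ind u y))"
  shows "principal V m (\<lambda>y. N * E y - N * degree V E * ind u y)"
proof -
  have "principal V m (\<lambda>y. \<Sum>x\<in>V. E x * (N * (ind x y - ind u y)))"
    by (rule principal_sum[OF finite_V]) (rule principal_scale[OF H])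
  moreover have "(\<Sum>x\<in>V. E x * (N * (ind x y - ind u y))) = N * E y - N * degree V E * ind u y"
    if "y \<in> V" for y
  proof -
    have "(\<Sum>x\<in>V. E x * (N * (ind x y - ind u y)))
        = N * (\<Sum>x\<in>V. E x * ind x y) - N * ind u y * (\<Sum>x\<in>V. E x)"
      by (simp add: algebra_simps sum_subtractf sum_distrib_left sum_distrib_right)
    then show ?thesis using sum_mult_ind[OF finite_V that] unfolding degree_def by simp
  qed
  ultimately show ?thesis by (rule principal_cong)
qed

text \<open>Reducing every coefficient modulo N and moving the surplus to u.\<close>

lemma effective_equiv_if_large_degree:
  assumes N: "0 < N" and u: "u \<in> V"
    and H: "\<And>x. x \<in> V \<Longrightarrow> principal V m (\<lambda>y. N * (ind x y - ind u y))"
    and deg: "int (card V) * N \<le> degree V E"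
  shows "\<exists>F. effective V F \<and> lin_equiv V m E F"
proof -
  define Q where "Q x = E x div N" for x
  define F where "F y = E y mod N + N * degree V Q * ind u y" for y
  have "degree V E = N * degree V Q + (\<Sum>x\<in>V. E x mod N)"
    unfolding degree_def Q_def sum_distrib_left sum.distrib[symmetric] by simp
  moreover have "(\<Sum>x\<in>V. E x mod N) \<le> (\<Sum>x\<in>V. N)"
    by (rule sum_mono) (use pos_mod_bound[OF N] in \<open>simp add: less_imp_le\<close>)
  ultimately have "0 \<le> N * degree V Q" using deg by simp
  then have "effective V F" unfolding effective_def F_def ind_def using N by simp
  moreover have "N * Q x - N * degree V Q * ind u x = E x - F x" for x
    using minus_mod_eq_mult_div[of "E x" N] unfolding F_def Q_def by (simp add: algebra_simps)
  then have "lin_equiv V m E F"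
    unfolding lin_equiv_iff_principal using principal_scaled_degree_shift[OF u H, of Q]
    by (simp add: principal_cong)
  ultimately show ?thesis by blast
qed

lemma lin_equiv_pushforward:
  assumes s: "\<And>x. x \<in> V \<Longrightarrow> principal V m (\<lambda>y. Q y - ind x y - ind (s x) y)"
  shows "lin_equiv V m (\<lambda>y. degree V E * Q y - E y) (\<lambda>y. \<Sum>x\<in>V. E x * ind (s x) y)"
  unfolding lin_equiv_iff_principal
proof -
  have "principal V m (\<lambda>y. \<Sum>x\<in>V. E x * (Q y - ind x y - ind (s x) y))"
    by (rule principal_sum[OF finite_V]) (rule principal_scale[OF s])
  moreover have "(\<Sum>x\<in>V. E x * (Q y - ind x y - ind (s x) y))
      = degree V E * Q y - E y - (\<Sum>x\<in>V. E x * ind (s x) y)" if "y \<in> V" for y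
  proof -
    have "(\<Sum>x\<in>V. E x * (Q y - ind x y - ind (s x) y))
        = (\<Sum>x\<in>V. E x) * Q y - (\<Sum>x\<in>V. E x * ind x y) - (\<Sum>x\<in>V. E x * ind (s x) y)"
      by (simp add: algebra_simps sum_subtractf sum_distrib_left sum.distrib)
    then show ?thesis using sum_mult_ind[OF finite_V that] unfolding degree_def by simp
  qed
  ultimately show "principal V m (\<lambda>y. degree V E * Q y - E y - (\<Sum>x\<in>V. E x * ind (s x) y))"
    by (rule principal_cong)
qed

text \<open>Each chip x of E is exchanged for its partner x', using u + v \<sim> x + x'.\<close>

lemma rank_multiple_ge:
  assumes u: "u \<in> V" and v: "v \<in> V"
    and partner: "\<And>x. x \<in> V \<Longrightarrow> \<exists>x'\<in>V. principal V m (\<lambda>y. ind u y + ind v y - ind x y - ind x' y)"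
  shows "int c \<le> rank V m (\<lambda>y. int c * (ind u y + ind v y))"
proof -
  obtain s where s: "\<And>x. x \<in> V \<Longrightarrow> principal V m (\<lambda>y. ind u y + ind v y - ind x y - ind (s x) y)"
    using partner by metis
  have "rank_at_least V m (\<lambda>y. int c * (ind u y + ind v y)) c" unfolding rank_at_least_def
  proof (intro allI impI)
    fix E assume E: "effective V E \<and> degree V E = int c"
    have "effective V (\<lambda>y. \<Sum>x\<in>V. E x * ind (s x) y)"
      using E unfolding effective_def by (auto intro!: sum_nonneg simp: ind_def)
    moreover have "lin_equiv V m (\<lambda>y. int c * (ind u y + ind v y) - E y)
        (\<lambda>y. \<Sum>x\<in>V. E x * ind (s x) y)"
      using lin_equiv_pushforward[of "\<lambda>y. ind u y + ind v y" s E] s E by simp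
    ultimately show "\<exists>F. effective V F \<and> lin_equiv V m (\<lambda>y. int c * (ind u y + ind v y) - E y) F"
      by blast
  qed
  then show ?thesis using rank_ge_iff by blast
qed

end

section \<open>The transmission permutation\<close>

lemma ex_exit_up:
  fixes i j :: nat
  shows "P i \<Longrightarrow> \<not> P j \<Longrightarrow> i \<le> j \<Longrightarrow> \<exists>k. i \<le> k \<and> k < j \<and> P k \<and> \<not> P (Suc k)"
proof (induction j)
  case 0 then show ?case by simp
next
  case (Suc j)
  show ?case
  proof (cases "P j")
    case True
    have "i \<le> j" using Suc.prems True by (metis le_SucE)
    then show ?thesis using True Suc.prems by blast
  next
    case False
    have "i \<le> j" using Suc.prems False by (metis le_SucE)
    then show ?thesis using Suc.IH Suc.prems False by force
  qed
qed

lemma ex_exit_down: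
  fixes i :: nat
  shows "P i \<Longrightarrow> \<not> P 0 \<Longrightarrow> \<exists>k. 0 < k \<and> k \<le> i \<and> P k \<and> \<not> P (k - 1)"
proof (induction i)
  case 0 then show ?case by simp
next
  case (Suc i)
  show ?case
  proof (cases "P i")
    case True then show ?thesis using Suc by (meson le_SucI)
  next
    case False then show ?thesis using Suc.prems by (intro exI[of _ "Suc i"]) simp
  qed
qed

lemma ex1_unit_jump:
  fixes h :: "int \<Rightarrow> int"
  assumes range: "\<And>x. 0 \<le> h x \<and> h x \<le> 1" and mono: "\<And>x. h (x - 1) \<le> h x"
    and x0: "h x0 = 0" and x1: "h x1 = 1"
  shows "\<exists>!x. h x - h (x - 1) = 1"
proof -
  have mono_shift: "h x \<le> h (x + int n)" for x n
  proof (induction n)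
    case (Suc n)
    then show ?case using mono[of "x + int (Suc n)"] by simp
  qed simp
  have mono_le: "h x \<le> h y" if "x \<le> y" for x y
    using mono_shift[of x "nat (y - x)"] that by simp
  have "x0 < x1" using mono_le[of x1 x0] x0 x1 by force
  then obtain k where k: "h (x0 + int k) = 0" "h (x0 + int (Suc k)) \<noteq> 0"
    using ex_exit_up[of "\<lambda>k. h (x0 + int k) = 0" 0 "nat (x1 - x0)"] x0 x1 by auto
  have "h (x0 + int (Suc k)) = 1" using k(2) range[of "x0 + int (Suc k)"] by linarith
  then have jump: "h (x0 + int (Suc k)) - h (x0 + int (Suc k) - 1) = 1" using k(1) by simp
  have unique: "y = y'" if "h y - h (y - 1) = 1" "h y' - h (y' - 1) = 1" for y y'
  proof -
    have "h y = 1 \<and> h (y - 1) = 0" "h y' = 1 \<and> h (y' - 1) = 0"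
      using that range[of y] range[of "y - 1"] range[of y'] range[of "y' - 1"] by auto
    then show ?thesis using mono_le[of y "y' - 1"] mono_le[of y' "y - 1"] by fastforce
  qed
  show ?thesis using jump unique by blast
qed

lemma periodic_sublinear_bound_absurd:
  fixes f :: "int \<Rightarrow> int" and K :: nat
  assumes step: "\<And>x. f (x + int K) \<le> f x + (int K - 1)" and lower: "\<And>x. x - C \<le> f x"
  shows False
proof -
  have iter: "f (int t * int K) \<le> f 0 + int t * (int K - 1)" for t
  proof (induction t)
    case (Suc t)
    have "f (int t * int K + int K) \<le> f (int t * int K) + (int K - 1)" by (rule step)
    then show ?case using Suc by (simp add: algebra_simps)
  qed simp
  define t where "t = nat (f 0 + C) + 1"
  have "int t * int K - C \<le> f 0 + int t * (int K - 1)"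
    using lower[of "int t * int K"] iter[of t] by linarith
  moreover have "f 0 + C < int t" unfolding t_def by simp
  ultimately show False by (simp add: algebra_simps)
qed

locale submodular_twice_marked = multigraph V m for V :: "'v set" and m +
  fixes u v :: 'v and K :: nat and C0 :: int and D :: "'v \<Rightarrow> int"
  assumes u_in_V: "u \<in> V" and v_in_V: "v \<in> V" and K_pos: "1 \<le> K"
    and K_torsion: "lin_equiv V m (\<lambda>x. int K * ind u x) (\<lambda>x. int K * ind v x)"
    and large_degree_effective: "\<And>E. C0 \<le> degree V E \<Longrightarrow> \<exists>F. effective V F \<and> lin_equiv V m E F"
    and submodular_D: "submodular V m u v D"
begin

definition rk :: "int \<Rightarrow> int \<Rightarrow> int" where "rk a b = rank V m (twist u v D a (-b))"

definition delta :: "int \<Rightarrow> int \<Rightarrow> int" where "delta a b = Delta V m u v (twist u v D a (-b))"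

lemma delta_eq_rk: "delta a b = rk a b - rk (a-1) b - rk a (b+1) + rk (a-1) (b+1)"
proof -
  have 1: "twist u v (twist u v D a (-b)) (-1) 0 = twist u v D (a-1) (-b)"
    by (simp add: twist_def fun_eq_iff algebra_simps)
  have 2: "twist u v (twist u v D a (-b)) 0 (-1) = twist u v D a (-(b+1))"
    by (simp add: twist_def fun_eq_iff algebra_simps)
  have 3: "twist u v (twist u v D a (-b)) (-1) (-1) = twist u v D (a-1) (-(b+1))"
    by (simp add: twist_def fun_eq_iff algebra_simps)
  show ?thesis unfolding delta_def Delta_def rk_def 1 2 3 by simp
qed

lemma delta_nonneg: "0 \<le> delta a b"
  using submodular_D unfolding submodular_def delta_def by blast

lemma degree_twist: "degree V (twist u v D a (-b)) = degree V D + a - b"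
  unfolding twist_def degree_def using finite_V u_in_V v_in_V
  by (simp add: sum.distrib sum_subtractf sum_scaled_ind)

lemma rk_negative: "degree V D + a - b < 0 \<Longrightarrow> rk a b = -1"
  unfolding rk_def by (rule rank_negative_degree) (simp add: degree_twist)

lemma rk_ge_degree: "degree V D + a - b - C0 \<le> rk a b"
proof -
  have "degree V (twist u v D a (-b)) - C0 \<le> rk a b"
    unfolding rk_def by (rule rank_ge_degree_minus) (rule large_degree_effective)
  then show ?thesis using degree_twist by simp
qed

lemma rk_step_u: "rk a b - 1 \<le> rk (a-1) b \<and> rk (a-1) b \<le> rk a b"
proof -
  have e: "twist u v D (a-1) (-b) = (\<lambda>x. twist u v D a (-b) x - ind u x)"
    by (simp add: twist_def fun_eq_iff algebra_simps)
  show ?thesis unfolding rk_def e using rank_remove_chip[OF u_in_V] by blast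
qed

lemma rk_step_v: "rk a b - 1 \<le> rk a (b+1) \<and> rk a (b+1) \<le> rk a b"
proof -
  have e: "twist u v D a (-(b+1)) = (\<lambda>x. twist u v D a (-b) x - ind v x)"
    by (simp add: twist_def fun_eq_iff algebra_simps)
  show ?thesis unfolding rk_def e using rank_remove_chip[OF v_in_V] by blast
qed

lemma rk_periodic: "a' = a + int K \<Longrightarrow> b' = b + int K \<Longrightarrow> rk a' b' = rk a b"
proof -
  assume a: "a' = a + int K" and b: "b' = b + int K"
  have "lin_equiv V m (twist u v D a' (-b')) (twist u v D a (-b))"
    using K_torsion unfolding lin_equiv_iff_principal
    by (rule principal_cong) (simp add: twist_def a b algebra_simps)
  then show ?thesis unfolding rk_def by (rule rank_lin_equiv)
qed

lemma rk_drop_v_le: "rk a b - rk a (b + int n) \<le> int n"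
proof (induction n)
  case (Suc n)
  have shift: "b + int (Suc n) = b + int n + 1" by simp
  show ?case unfolding shift unfolding of_nat_Suc using Suc rk_step_v[of a "b + int n"] by linarith
qed simp

lemma rk_drop_u_le: "rk a b - rk (a - int n) b \<le> int n"
proof (induction n)
  case (Suc n)
  have shift: "a - int (Suc n) = a - int n - 1" by simp
  show ?case unfolding shift unfolding of_nat_Suc using Suc rk_step_u[of "a - int n" b] by linarith
qed simp

text \<open>If the rank never dropped between two adjacent rows (columns) of the table rk, periodicity
would make the rank grow along them with slope at most (K - 1)/K, against the lower bound of
slope 1 coming from large degrees.\<close>

lemma ex_rk_drop_v: "\<exists>a. rk a b - rk a (b + 1) = 1"
proof (rule ccontr)
  assume no_drop: "\<not> ?thesis"
  have flat: "rk a b = rk a (b + 1)" for a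
  proof -
    have "rk a b - rk a (b + 1) \<noteq> 1" using no_drop by blast
    then show ?thesis using rk_step_v[of a b] by linarith
  qed
  show False
  proof (rule periodic_sublinear_bound_absurd[of "\<lambda>a. rk a b" K "C0 + b - degree V D"])
    fix a
    have "rk (a + int K) (b + 1) - rk (a + int K) (b + 1 + int (K - 1)) \<le> int (K - 1)"
      by (rule rk_drop_v_le)
    moreover have "rk (a + int K) (b + 1 + int (K - 1)) = rk a b"
      by (rule rk_periodic) (use K_pos in auto)
    ultimately show "rk (a + int K) b \<le> rk a b + (int K - 1)"
      using flat[of "a + int K"] K_pos by (simp add: of_nat_diff)
  next
    show "x - (C0 + b - degree V D) \<le> rk x b" for x using rk_ge_degree[of x b] by linarith
  qed
qed

lemma ex_rk_drop_u: "\<exists>b. rk a b - rk (a - 1) b = 1"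
proof (rule ccontr)
  assume no_drop: "\<not> ?thesis"
  have flat: "rk a b = rk (a - 1) b" for b
  proof -
    have "rk a b - rk (a - 1) b \<noteq> 1" using no_drop by blast
    then show ?thesis using rk_step_u[of a b] by linarith
  qed
  show False
  proof (rule periodic_sublinear_bound_absurd[of "\<lambda>x. rk a (- x)" K "C0 - degree V D - a"])
    fix x
    have "rk (a - 1) (- x - int K) - rk (a - 1 - int (K - 1)) (- x - int K) \<le> int (K - 1)"
      by (rule rk_drop_u_le)
    moreover have "rk (a - 1 - int (K - 1)) (- x - int K) = rk a (- x)"
      by (rule rk_periodic[symmetric]) (use K_pos in auto)
    ultimately show "rk a (- (x + int K)) \<le> rk a (- x) + (int K - 1)"
      using flat[of "- x - int K"] K_pos by (simp add: of_nat_diff)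
  next
    show "x - (C0 - degree V D - a) \<le> rk a (- x)" for x using rk_ge_degree[of a "- x"] by linarith
  qed
qed

lemma delta_row_unique: "\<exists>!a. delta a b = 1"
proof -
  define h where "h a = rk a b - rk a (b + 1)" for a
  have delta_h: "delta a b = h a - h (a - 1)" for a unfolding h_def delta_eq_rk by simp
  obtain a0 where a0: "rk a0 b - rk a0 (b + 1) = 1" using ex_rk_drop_v by blast
  have "\<exists>!a. h a - h (a - 1) = 1"
  proof (rule ex1_unit_jump)
    show "0 \<le> h x \<and> h x \<le> 1" for x unfolding h_def using rk_step_v[of x b] by simp
    show "h (x - 1) \<le> h x" for x using delta_nonneg[of x b] delta_h[of x] by simp
    show "h (b - degree V D - 1) = 0" unfolding h_def by (simp add: rk_negative)
    show "h a0 = 1" unfolding h_def by (rule a0)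
  qed
  then show ?thesis using delta_h by simp
qed

lemma delta_0_or_1: "delta a b = 0 \<or> delta a b = 1"
proof -
  have "delta a b \<le> 1" unfolding delta_eq_rk using rk_step_v[of a b] rk_step_v[of "a-1" b] by linarith
  then show ?thesis using delta_nonneg[of a b] by linarith
qed

lemma delta_column_unique: "\<exists>!b. delta a b = 1"
proof -
  define h where "h x = rk a (-x) - rk (a-1) (-x)" for x
  have delta_h: "delta a (- x) = h x - h (x - 1)" for x
    unfolding h_def delta_eq_rk by (simp add: algebra_simps)
  obtain b0 where b0: "rk a b0 - rk (a-1) b0 = 1" using ex_rk_drop_u by blast
  have "\<exists>!x. h x - h (x-1) = 1"
  proof (rule ex1_unit_jump)
    show "0 \<le> h x \<and> h x \<le> 1" for x unfolding h_def using rk_step_u[of a "-x"] by simp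
    show "h (x-1) \<le> h x" for x using delta_nonneg[of a "-x"] delta_h[of x] by simp
    show "h (- (degree V D + a + 1)) = 0" unfolding h_def by (simp add: rk_negative)
    show "h (-b0) = 1" unfolding h_def using b0 by simp
  qed
  then obtain x where x: "h x - h (x-1) = 1" and xu: "\<And>y. h y - h (y-1) = 1 \<Longrightarrow> y = x" by blast
  show ?thesis
  proof (rule ex1I[of _ "-x"])
    show "delta a (-x) = 1" using x delta_h by simp
  next
    fix b assume "delta a b = 1"
    then have "h (-b) - h (-b-1) = 1" using delta_h[of "-b"] by simp
    then show "b = -x" using xu by fastforce
  qed
qed

definition tau :: "int \<Rightarrow> int" where "tau b = (THE a. delta a b = 1)"

lemma delta_tau: "delta (tau b) b = 1"
  unfolding tau_def using delta_row_unique by (rule theI')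

lemma tau_eqI: "delta a b = 1 \<Longrightarrow> tau b = a"
  using delta_row_unique delta_tau by blast

lemma delta_eq_indicator_tau: "delta a b = (if tau b = a then 1 else 0)"
proof (cases "tau b = a")
  case True then show ?thesis using delta_tau by auto
next
  case False
  then have "delta a b \<noteq> 1" using tau_eqI by blast
  then show ?thesis using False delta_0_or_1[of a b] by simp
qed

lemma tau_bij: "bij tau"
proof (rule bijI)
  show "inj tau"
  proof (rule injI)
    fix b b' assume "tau b = tau b'"
    then have "delta (tau b) b = 1" "delta (tau b) b' = 1"
      using delta_tau[of b] delta_tau[of b'] by simp_all
    then show "b = b'" using delta_column_unique by blast
  qed
  show "surj tau" unfolding surj_def
  proof
    fix a
    obtain b where "delta a b = 1" using delta_column_unique by blast
    then have "tau b = a" by (rule tau_eqI)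
    then show "\<exists>b. a = tau b" by auto
  qed
qed

lemma trans_perm_eq_tau: "trans_perm V m u v D = tau"
  unfolding trans_perm_def
proof (rule the_equality)
  show "bij tau \<and> (\<forall>a b. Delta V m u v (twist u v D a (-b)) = (if tau b = a then 1 else 0))"
    using tau_bij delta_eq_indicator_tau unfolding delta_def by blast
next
  fix t assume "bij t \<and> (\<forall>a b. Delta V m u v (twist u v D a (-b)) = (if t b = a then 1 else 0))"
  then have "delta (t b) b = 1" for b unfolding delta_def by simp
  then have "tau b = t b" for b using tau_eqI by blast
  then show "t = tau" by (simp add: fun_eq_iff)
qed

lemma tau_eq_if_Delta_pos: "1 \<le> Delta V m u v (twist u v D a (-b)) \<Longrightarrow> tau b = a"
  using delta_0_or_1[of a b] tau_eqI unfolding delta_def by fastforce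

lemma delta_periodic: "delta (a + int K) (b + int K) = delta a b"
proof -
  have 1: "rk (a + int K) (b + int K) = rk a b" by (rule rk_periodic) auto
  have 2: "rk (a + int K - 1) (b + int K) = rk (a-1) b" by (rule rk_periodic) auto
  have 3: "rk (a + int K) (b + int K + 1) = rk a (b+1)" by (rule rk_periodic) auto
  have 4: "rk (a + int K - 1) (b + int K + 1) = rk (a-1) (b+1)" by (rule rk_periodic) auto
  show ?thesis unfolding delta_eq_rk 1 2 3 4 ..
qed

lemma tau_periodic: "tau (b + int K) = tau b + int K"
proof -
  have "delta (tau b + int K) (b + int K) = 1" using delta_periodic delta_tau by simp
  then show ?thesis by (rule tau_eqI)
qed

end

section \<open>Banana graphs\<close>

lemma int_card_filter: "finite A \<Longrightarrow> int (card {b\<in>A. P b}) = (\<Sum>b\<in>A. if P b then 1 else 0)"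
  by (simp add: sum.inter_filter[symmetric])

lemma sum_card_fibres:
  assumes "finite A" "finite W" "\<And>b. b \<in> A \<Longrightarrow> nb b \<in> W"
  shows "(\<Sum>y\<in>W. int (card {b\<in>A. nb b = y})) = int (card A)"
proof -
  have "(\<Sum>y\<in>W. int (card {b\<in>A. nb b = y})) = (\<Sum>y\<in>W. \<Sum>b\<in>A. if nb b = y then 1 else 0)"
    using assms(1) by (simp add: int_card_filter)
  also have "\<dots> = (\<Sum>b\<in>A. \<Sum>y\<in>W. if nb b = y then 1 else 0)" by (rule sum.swap)
  also have "\<dots> = (\<Sum>b\<in>A. 1)" using assms(2,3) by (simp add: sum.delta)
  finally show ?thesis by simp
qed

locale banana =
  fixes g :: nat and ns :: "nat \<Rightarrow> nat"
  assumes ns_pos: "\<And>\<alpha>. \<alpha> \<le> g \<Longrightarrow> 0 < ns \<alpha>"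
begin

abbreviation u :: "nat \<times> nat" where "u \<equiv> (0, 0)"
abbreviation v :: "nat \<times> nat" where "v \<equiv> (0, ns 0)"
abbreviation "vert \<equiv> banana_vert ns"
abbreviation "BV \<equiv> banana_V g ns"
abbreviation "Bm \<equiv> banana_m g ns"

lemma ns0_pos: "0 < ns 0" using ns_pos by simp

lemma vert_0[simp]: "vert a 0 = u" by (simp add: banana_vert_def)

lemma vert_ns: "a \<le> g \<Longrightarrow> vert a (ns a) = v"
  using ns_pos[of a] by (simp add: banana_vert_def)

lemma vert_eq_u_iff: "i \<le> ns a \<Longrightarrow> a \<le> g \<Longrightarrow> vert a i = u \<longleftrightarrow> i = 0"
  unfolding banana_vert_def using ns_pos[of a] ns0_pos by auto

lemma vert_eq_v_iff: "i \<le> ns a \<Longrightarrow> a \<le> g \<Longrightarrow> vert a i = v \<longleftrightarrow> i = ns a"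
  unfolding banana_vert_def using ns_pos[of a] ns0_pos by auto

lemma vert_interior_eq_iff: "0 < i \<Longrightarrow> i < ns a \<Longrightarrow> j \<le> ns b \<Longrightarrow> vert b j = vert a i \<longleftrightarrow> (b = a \<and> j = i)"
  unfolding banana_vert_def by auto

lemma vert_in_BV: "a \<le> g \<Longrightarrow> i \<le> ns a \<Longrightarrow> vert a i \<in> BV"
  unfolding banana_V_def by blast

lemma BV_cases: "x \<in> BV \<Longrightarrow> \<exists>a i. a \<le> g \<and> i \<le> ns a \<and> x = vert a i"
  unfolding banana_V_def by blast

lemma u_in_BV: "u \<in> BV" using vert_in_BV[of 0 0] by simp
lemma v_in_BV: "v \<in> BV" using vert_in_BV[of 0 "ns 0"] vert_ns[of 0] by simp

lemma finite_BV: "finite BV"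
proof -
  have "BV \<subseteq> (\<lambda>(a,i). vert a i) ` (SIGMA a:{..g}. {..ns a})"
    unfolding banana_V_def by auto
  then show ?thesis by (rule finite_surj[rotated]) auto
qed

lemma vert_ne_vert_Suc: "a \<le> g \<Longrightarrow> i < ns a \<Longrightarrow> vert a i \<noteq> vert a (Suc i)"
  unfolding banana_vert_def using ns0_pos by auto

lemma Bm_sym: "Bm x y = Bm y x"
  unfolding banana_m_def by (simp add: insert_commute)

definition path_edges :: "nat \<times> nat \<Rightarrow> nat \<times> nat \<Rightarrow> (nat \<times> nat) set" where
  "path_edges x y = {(a, i). a \<le> g \<and> i < ns a \<and> {vert a i, vert a (Suc i)} = {x, y}}"

lemma Bm_eq_card: "Bm x y = card (path_edges x y)"
  unfolding banana_m_def path_edges_def ..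

lemma finite_path_edges: "finite (path_edges x y)"
proof (rule finite_subset)
  show "path_edges x y \<subseteq> (SIGMA a:{..g}. {..<ns a})" unfolding path_edges_def by auto
qed auto

lemma Bm_loop: "Bm x x = 0"
proof -
  have "path_edges x x = {}"
    unfolding path_edges_def using vert_ne_vert_Suc by (force simp: doubleton_eq_iff)
  then show ?thesis by (simp add: Bm_eq_card)
qed

lemma Bm_consecutive_pos: "a \<le> g \<Longrightarrow> j < ns a \<Longrightarrow> 1 \<le> Bm (vert a j) (vert a (Suc j))"
proof -
  assume "a \<le> g" "j < ns a"
  then have "(a, j) \<in> path_edges (vert a j) (vert a (Suc j))" unfolding path_edges_def by simp
  then show ?thesis using finite_path_edges by (auto simp: Bm_eq_card Suc_le_eq card_gt_0_iff)
qed

lemma path_edges_u: "path_edges u x = (\<lambda>b. (b, 0)) ` {b\<in>{..g}. vert b 1 = x}"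
proof (rule set_eqI, rule iffI)
  fix p :: "nat \<times> nat" assume "p \<in> path_edges u x"
  then obtain a i where p: "p = (a, i)" "a \<le> g" "i < ns a" "{vert a i, vert a (Suc i)} = {u, x}"
    unfolding path_edges_def by blast
  have "vert a (Suc i) \<noteq> u" using vert_eq_u_iff[of "Suc i" a] p by simp
  then have "vert a i = u" "vert a (Suc i) = x" using p(4) by (auto simp: doubleton_eq_iff)
  then show "p \<in> (\<lambda>b. (b, 0)) ` {b\<in>{..g}. vert b 1 = x}" using vert_eq_u_iff[of i a] p by auto
next
  fix p :: "nat \<times> nat" assume "p \<in> (\<lambda>b. (b, 0)) ` {b\<in>{..g}. vert b 1 = x}"
  then show "p \<in> path_edges u x" unfolding path_edges_def using ns_pos by auto
qed

lemma path_edges_v: "path_edges v x = (\<lambda>b. (b, ns b - 1)) ` {b\<in>{..g}. vert b (ns b - 1) = x}"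
proof (rule set_eqI, rule iffI)
  fix p :: "nat \<times> nat" assume "p \<in> path_edges v x"
  then obtain a i where p: "p = (a, i)" "a \<le> g" "i < ns a" "{vert a i, vert a (Suc i)} = {v, x}"
    unfolding path_edges_def by blast
  have "vert a i \<noteq> v" using vert_eq_v_iff[of i a] p by simp
  then have "vert a (Suc i) = v \<and> vert a i = x" using p(4) by (auto simp: doubleton_eq_iff)
  then have "Suc i = ns a" "vert a i = x" using vert_eq_v_iff[of "Suc i" a] p by auto
  then have "i = ns a - 1" by simp
  then have i: "i = ns a - 1" "vert a (ns a - 1) = x" using \<open>vert a i = x\<close> by simp_all
  show "p \<in> (\<lambda>b. (b, ns b - 1)) ` {b\<in>{..g}. vert b (ns b - 1) = x}"
    by (rule image_eqI[of _ _ a]) (use p i in auto)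
next
  fix p :: "nat \<times> nat" assume "p \<in> (\<lambda>b. (b, ns b - 1)) ` {b\<in>{..g}. vert b (ns b - 1) = x}"
  then obtain b where b: "p = (b, ns b - 1)" "b \<le> g" "vert b (ns b - 1) = x" by auto
  then have "Suc (ns b - 1) = ns b" using ns_pos[of b] by simp
  then show "p \<in> path_edges v x" unfolding path_edges_def using b ns_pos[of b] vert_ns[of b] by auto
qed

lemma Bm_u_eq_card: "Bm u x = card {b\<in>{..g}. vert b 1 = x}"
  unfolding Bm_eq_card path_edges_u by (rule card_image) (auto intro: inj_onI)

lemma Bm_v_eq_card: "Bm v x = card {b\<in>{..g}. vert b (ns b - 1) = x}"
  unfolding Bm_eq_card path_edges_v by (rule card_image) (auto intro: inj_onI)

lemma path_edges_interior:
  assumes a: "a \<le> g" "0 < i" "i < ns a"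
  shows "path_edges (vert a i) x
      = {p. p = (a, i - 1) \<and> x = vert a (i - 1)} \<union> {p. p = (a, i) \<and> x = vert a (Suc i)}"
proof (rule set_eqI, rule iffI)
  fix p :: "nat \<times> nat" assume "p \<in> path_edges (vert a i) x"
  then obtain b j where p: "p = (b, j)" "b \<le> g" "j < ns b" "{vert b j, vert b (Suc j)} = {vert a i, x}"
    unfolding path_edges_def by blast
  then consider "vert b j = vert a i" "vert b (Suc j) = x" | "vert b (Suc j) = vert a i" "vert b j = x"
    by (auto simp: doubleton_eq_iff)
  then show "p \<in> {p. p = (a, i - 1) \<and> x = vert a (i - 1)} \<union> {p. p = (a, i) \<and> x = vert a (Suc i)}"
  proof cases
    case 1
    then have "b = a" "j = i" using vert_interior_eq_iff[of i a j b] a p by simp_all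
    then show ?thesis using 1 p by simp
  next
    case 2
    then have "b = a" "Suc j = i" using vert_interior_eq_iff[of i a "Suc j" b] a p by simp_all
    then show ?thesis using 2 p by auto
  qed
next
  fix p :: "nat \<times> nat"
  assume "p \<in> {p. p = (a, i - 1) \<and> x = vert a (i - 1)} \<union> {p. p = (a, i) \<and> x = vert a (Suc i)}"
  then show "p \<in> path_edges (vert a i) x"
    unfolding path_edges_def using a by (auto simp: insert_commute)
qed

lemma Bm_interior:
  assumes "a \<le> g" "0 < i" "i < ns a"
  shows "int (Bm (vert a i) x)
    = (if x = vert a (i - 1) then 1 else 0) + (if x = vert a (Suc i) then 1 else 0)"
proof -
  have "card (path_edges (vert a i) x)
      = (if x = vert a (i - 1) then 1 else 0) + (if x = vert a (Suc i) then 1 else 0)"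
    unfolding path_edges_interior[OF assms] using assms by (auto simp: card_insert_if)
  then show ?thesis by (simp add: Bm_eq_card)
qed

lemma valence_u: "(\<Sum>y\<in>BV. int (Bm u y)) = int g + 1"
  unfolding Bm_u_eq_card
  using sum_card_fibres[of "{..g}" BV "\<lambda>b. vert b 1"] finite_BV vert_in_BV ns_pos
  by (simp add: Suc_leI)

lemma valence_v: "(\<Sum>y\<in>BV. int (Bm v y)) = int g + 1"
  unfolding Bm_v_eq_card
  using sum_card_fibres[of "{..g}" BV "\<lambda>b. vert b (ns b - 1)"] finite_BV vert_in_BV ns_pos
  by simp

lemma valence_interior: "a \<le> g \<Longrightarrow> 0 < i \<Longrightarrow> i < ns a \<Longrightarrow> (\<Sum>y\<in>BV. int (Bm (vert a i) y)) = 2"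
  using finite_BV vert_in_BV[of a "i - 1"] vert_in_BV[of a "Suc i"]
  by (simp add: Bm_interior sum.distrib sum.delta)

end

sublocale banana \<subseteq> multigraph "banana_V g ns" "banana_m g ns"
  by unfold_locales (use finite_BV u_in_BV Bm_sym in auto)

context banana begin

lemma principal_fire_interior:
  assumes a: "a \<le> g" "0 < i" "i < ns a"
  shows "principal BV Bm (\<lambda>x. 2 * ind (vert a i) x - ind (vert a (i - 1)) x - ind (vert a (Suc i)) x)"
proof (rule principal_cong[OF principal_fire[OF vert_in_BV[of a i]]])
  show "a \<le> g" "i \<le> ns a" using a by auto
  fix x assume "x \<in> BV"
  show "(if x = vert a i then (\<Sum>y\<in>BV. int (Bm (vert a i) y)) else 0) - int (Bm x (vert a i))
      = 2 * ind (vert a i) x - ind (vert a (i - 1)) x - ind (vert a (Suc i)) x"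
    using valence_interior[OF a] Bm_interior[OF a, of x] Bm_sym[of x "vert a i"] by (simp add: ind_def)
qed

lemma principal_fire_u: "principal BV Bm (\<lambda>x. (int g + 1) * ind u x - (\<Sum>b\<le>g. ind (vert b 1) x))"
proof (rule principal_cong[OF principal_fire[OF u_in_BV]])
  fix x assume "x \<in> BV"
  have "int (Bm x u) = (\<Sum>b\<le>g. if vert b 1 = x then 1 else 0)"
    unfolding Bm_sym[of x] Bm_u_eq_card by (rule int_card_filter) simp
  also have "\<dots> = (\<Sum>b\<le>g. ind (vert b 1) x)" by (rule sum.cong) (auto simp: ind_def)
  finally show "(if x = u then (\<Sum>y\<in>BV. int (Bm u y)) else 0) - int (Bm x u)
      = (int g + 1) * ind u x - (\<Sum>b\<le>g. ind (vert b 1) x)"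
    using valence_u by (simp add: ind_def)
qed

text \<open>Firing the interior vertices of a path shows that v_{a,i} - u \<sim> i (v_{a,1} - u).\<close>

abbreviation path_defect :: "nat \<Rightarrow> nat \<Rightarrow> nat \<times> nat \<Rightarrow> int" where
  "path_defect a i \<equiv> (\<lambda>x. ind (vert a i) x - ind u x - int i * (ind (vert a 1) x - ind u x))"

lemma principal_path_defect: "a \<le> g \<Longrightarrow> i \<le> ns a \<Longrightarrow> principal BV Bm (path_defect a i)"
proof (induction i rule: induct_nat_012)
  case 0 then show ?case by (simp add: principal_cong[OF principal_zero])
next
  case 1 then show ?case by (simp add: principal_cong[OF principal_zero])
next
  case (ge2 i)
  have IH: "principal BV Bm (path_defect a i)" "principal BV Bm (path_defect a (Suc i))"
    using ge2 by simp_all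
  have "principal BV Bm
      (\<lambda>x. 2 * ind (vert a (Suc i)) x - ind (vert a i) x - ind (vert a (Suc (Suc i))) x)"
    using principal_fire_interior[of a "Suc i"] ge2.prems by simp
  then show ?case
    by (rule principal_lincomb3[OF IH(2) IH(1), of _ _ 2 "-1" "-1"]) (simp add: algebra_simps)
qed

lemma principal_path_defect_end:
  "a \<le> g \<Longrightarrow> principal BV Bm (\<lambda>x. ind v x - ind u x - int (ns a) * (ind (vert a 1) x - ind u x))"
  using principal_path_defect[of a "ns a"] vert_ns[of a] by simp

lemma ex_mirror_vertex:
  assumes x: "x \<in> BV"
  shows "\<exists>x'\<in>BV. principal BV Bm (\<lambda>y. ind u y + ind v y - ind x y - ind x' y)"
proof -
  obtain a i where ai: "a \<le> g" "i \<le> ns a" "x = vert a i" using BV_cases[OF x] by blast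
  have "int (ns a - i) = int (ns a) - int i" using ai by simp
  then have "principal BV Bm (\<lambda>y. ind u y + ind v y - ind x y - ind (vert a (ns a - i)) y)"
    using ai
    by (intro principal_lincomb3[OF principal_path_defect[of a i]
          principal_path_defect[of a "ns a - i"] principal_path_defect_end[of a], of _ "-1" "-1" 1])
      (simp_all add: algebra_simps)
  moreover have "vert a (ns a - i) \<in> BV" using ai by (simp add: vert_in_BV)
  ultimately show ?thesis by blast
qed

text \<open>Each path gives n_a (v_{a,1} - u) \<sim> v - u, and firing u gives \<Sum>_a (v_{a,1} - u) \<sim> 0;
scaling the path relations to the common multiple \<Prod>_a n_a and summing shows that
(\<Sum>_a \<Prod>_{b \<noteq> a} n_b)(v - u) is principal.\<close>

definition path_prod :: nat where "path_prod = (\<Prod>b\<le>g. ns b)"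
definition cofactor :: "nat \<Rightarrow> nat" where "cofactor b = path_prod div ns b"
definition torsion_bound :: nat where "torsion_bound = (\<Sum>b\<le>g. cofactor b)"

lemma path_prod_pos: "0 < path_prod"
  unfolding path_prod_def by (rule prod_pos) (simp add: ns_pos)

lemma cofactor_mult: "b \<le> g \<Longrightarrow> int (cofactor b) * int (ns b) = int path_prod"
proof -
  assume "b \<le> g"
  then have "ns b dvd path_prod" unfolding path_prod_def by (intro dvd_prodI) auto
  then show ?thesis unfolding cofactor_def by (simp flip: of_nat_mult)
qed

lemma torsion_bound_pos: "1 \<le> torsion_bound"
proof -
  have "ns 0 dvd path_prod" unfolding path_prod_def by (rule dvd_prodI) auto
  then have "ns 0 \<le> path_prod" using path_prod_pos by (rule dvd_imp_le)
  then have "1 \<le> cofactor 0"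
    unfolding cofactor_def using ns0_pos div_greater_zero_iff[of path_prod "ns 0"] by linarith
  also have "cofactor 0 \<le> torsion_bound" unfolding torsion_bound_def by (rule member_le_sum) auto
  finally show ?thesis .
qed

lemma principal_path_torsion:
  assumes "b \<le> g"
  shows "principal BV Bm
    (\<lambda>x. int path_prod * (ind (vert b 1) x - ind u x) - int (cofactor b) * (ind v x - ind u x))"
  using principal_scale[OF principal_path_defect_end[OF assms], of "- int (cofactor b)"]
proof (rule principal_cong)
  fix x
  show "- int (cofactor b) * (ind v x - ind u x - int (ns b) * (ind (vert b 1) x - ind u x))
      = int path_prod * (ind (vert b 1) x - ind u x) - int (cofactor b) * (ind v x - ind u x)"
    by (simp add: cofactor_mult[OF assms, symmetric] algebra_simps)
qed

lemma principal_torsion: "principal BV Bm (\<lambda>x. int torsion_bound * (ind v x - ind u x))"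
proof -
  let ?w = "\<lambda>x. \<Sum>b\<le>g. ind (vert b 1) x"
  have "principal BV Bm (\<lambda>x. \<Sum>b\<le>g. int path_prod * (ind (vert b 1) x - ind u x)
      - int (cofactor b) * (ind v x - ind u x))"
    by (rule principal_sum) (use principal_path_torsion in auto)
  from principal_lincomb[OF this principal_fire_u, of "-1" "- int path_prod"]
  show ?thesis
  proof (rule principal_cong)
    fix x
    have "(\<Sum>b\<le>g. int path_prod * (ind (vert b 1) x - ind u x) - int (cofactor b) * (ind v x - ind u x))
        = int path_prod * ?w x - int path_prod * ((int g + 1) * ind u x)
          - int torsion_bound * (ind v x - ind u x)"
      unfolding torsion_bound_def
      by (simp add: sum_subtractf right_diff_distrib sum_distrib_left sum_distrib_right)
    then show "- 1 * (\<Sum>b\<le>g. int path_prod * (ind (vert b 1) x - ind u x)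
          - int (cofactor b) * (ind v x - ind u x))
        + - int path_prod * ((int g + 1) * ind u x - ?w x)
        = int torsion_bound * (ind v x - ind u x)"
      by (simp add: algebra_simps)
  qed
qed

lemma torsion_bound_equiv:
  "lin_equiv BV Bm (\<lambda>x. int torsion_bound * ind u x) (\<lambda>x. int torsion_bound * ind v x)"
  unfolding lin_equiv_iff_principal using principal_scale[OF principal_torsion, of "-1"]
  by (rule principal_cong) (simp add: algebra_simps)

lemma principal_scaled_vertex_minus_u:
  assumes "x \<in> BV"
  shows "principal BV Bm (\<lambda>y. int (path_prod * torsion_bound) * (ind x y - ind u y))"
proof -
  obtain a i where ai: "a \<le> g" "i \<le> ns a" "x = vert a i" using BV_cases[OF assms] by blast
  show ?thesis
    by (rule principal_lincomb3[OF principal_path_defect[OF ai(1,2)] principal_path_torsion[OF ai(1)]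
          principal_torsion, of _ "int (path_prod * torsion_bound)" "int i * int torsion_bound"
          "int i * int (cofactor a)"])
      (use ai in \<open>simp add: algebra_simps\<close>)
qed

lemma ex_effective_threshold:
  "\<exists>C. \<forall>E. C \<le> degree BV E \<longrightarrow> (\<exists>F. effective BV F \<and> lin_equiv BV Bm E F)"
proof -
  have "0 < int (path_prod * torsion_bound)" using path_prod_pos torsion_bound_pos by simp
  then show ?thesis
    using effective_equiv_if_large_degree[OF _ u_in_BV principal_scaled_vertex_minus_u] by blast
qed

lemma ex_path_vertex_with_edge_out:
  assumes a: "a \<le> g" and i: "0 < i" "i < ns a" and in_S: "vert a i \<in> S"
    and hub: "(q = v \<and> v \<notin> S) \<or> (q = u \<and> u \<notin> S)"
  shows "\<exists>k. 0 < k \<and> k < ns a \<and> vert a k \<in> S \<and> (\<exists>y\<in>BV - S. 1 \<le> Bm (vert a k) y)"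
proof (cases "q = v")
  case True
  then have "vert a (ns a) \<notin> S" using vert_ns[OF a(1)] hub ns0_pos by auto
  then obtain k where k: "i \<le> k" "k < ns a" "vert a k \<in> S" "vert a (Suc k) \<notin> S"
    using ex_exit_up[of "\<lambda>k. vert a k \<in> S" i "ns a"] in_S less_imp_le[OF i(2)] by blast
  moreover have "vert a (Suc k) \<in> BV - S" using k a vert_in_BV by auto
  moreover have "0 < k" using i k by simp
  ultimately show ?thesis using Bm_consecutive_pos[OF a k(2)] by blast
next
  case False
  then have "vert a 0 \<notin> S" using hub by auto
  then obtain k where k: "0 < k" "k \<le> i" "vert a k \<in> S" "vert a (k - 1) \<notin> S"
    using ex_exit_down[of "\<lambda>k. vert a k \<in> S" i] in_S by blast
  moreover have "vert a (k - 1) \<in> BV - S" using k a i vert_in_BV by auto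
  moreover have "1 \<le> Bm (vert a k) (vert a (k - 1))"
    using Bm_consecutive_pos[of a "k - 1"] a k i Bm_sym[of "vert a k"] by simp
  moreover have "k < ns a" using i k by simp
  ultimately show ?thesis by blast
qed

text \<open>The burning argument: a set containing only the hub p burns because p has g + 1 edges
leaving it; any other set contains interior path vertices, which hold no chips, and one of
them has an edge leaving the set since the set misses the other hub q.\<close>

lemma not_effective_multiple_minus_hub:
  assumes pq: "(p = u \<and> q = v) \<or> (p = v \<and> q = u)" and c: "c \<le> int g"
  shows "\<not> (\<exists>F. effective BV F \<and> lin_equiv BV Bm (\<lambda>x. c * ind p x - ind q x) F)"
proof (rule not_effective_if_burning)
  have p_ne_q: "p \<noteq> q" using pq ns0_pos by auto
  show "q \<in> BV" using pq u_in_BV v_in_BV by auto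
  show "c * ind p q - ind q q < 0" using p_ne_q by (simp add: ind_def)
  fix S assume S: "S \<subseteq> BV - {q}" "S \<noteq> {}"
  show "\<exists>x\<in>S. c * ind p x - ind q x < (\<Sum>y\<in>BV - S. int (Bm x y))"
  proof (cases "S \<subseteq> {p}")
    case True
    then have "S = {p}" using S by auto
    moreover have "(\<Sum>y\<in>BV - {p}. int (Bm p y)) = int g + 1"
      using sum_diff1[OF finite_BV, of "\<lambda>y. int (Bm p y)" p] pq u_in_BV v_in_BV
        valence_u valence_v Bm_loop by auto
    ultimately show ?thesis using p_ne_q c by (simp add: ind_def)
  next
    case False
    then obtain x0 where x0: "x0 \<in> S" "x0 \<noteq> p" by auto
    then obtain a i where ai: "a \<le> g" "i \<le> ns a" "x0 = vert a i" using S BV_cases by blast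
    have "x0 \<noteq> u" "x0 \<noteq> v" using x0 S pq by auto
    then have i: "0 < i" "i < ns a"
      using ai vert_eq_u_iff[of i a] vert_eq_v_iff[of i a] by (auto simp: le_less)
    have "(q = v \<and> v \<notin> S) \<or> (q = u \<and> u \<notin> S)" using pq S by auto
    then obtain k y where k: "0 < k" "k < ns a" "vert a k \<in> S" "y \<in> BV - S" "1 \<le> Bm (vert a k) y"
      using ex_path_vertex_with_edge_out[OF ai(1) i] x0 ai by blast
    have "int (Bm (vert a k) y) \<le> (\<Sum>y\<in>BV - S. int (Bm (vert a k) y))"
      by (rule member_le_sum) (use k finite_BV in auto)
    moreover have "vert a k \<noteq> u" "vert a k \<noteq> v"
      using vert_eq_u_iff[of k a] vert_eq_v_iff[of k a] k ai by auto
    ultimately show ?thesis using k(3,5) pq by (intro bexI[of _ "vert a k"]) (auto simp: ind_def)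
  qed
qed

lemma rank_hub_deficient_le:
  assumes pq: "(p = u \<and> q = v) \<or> (p = v \<and> q = u)" and c: "0 \<le> c" "c \<le> int g"
  shows "rank BV Bm (\<lambda>x. c * ind p x + (c - 1) * ind q x) \<le> c - 1"
proof (cases "c = 0")
  case True
  have "degree BV (\<lambda>x. c * ind p x + (c - 1) * ind q x) = -1"
    using degree_two_chips[of p q c "c - 1"] pq True u_in_BV v_in_BV by auto
  then show ?thesis using True by (simp add: rank_negative_degree)
next
  case False
  have q: "q \<in> BV" using pq u_in_BV v_in_BV by auto
  have "lin_equiv BV Bm (\<lambda>x. c * ind p x + (c - 1) * ind q x - c * ind q x) F
      = lin_equiv BV Bm (\<lambda>x. c * ind p x - ind q x) F" for F
    by (rule lin_equiv_cong_left) (simp add: algebra_simps)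
  then have "rank BV Bm (\<lambda>x. c * ind p x + (c - 1) * ind q x) < c"
    using rank_lt_if_not_effective[OF q c(1)] not_effective_multiple_minus_hub[OF pq c(2)] by simp
  then show ?thesis by simp
qed

lemma rank_multiple_u_v_ge:
  assumes "-1 \<le> c"
  shows "c \<le> rank BV Bm (\<lambda>x. c * ind u x + c * ind v x)"
proof (cases "c = -1")
  case True then show ?thesis using rank_ge_minus_1 by simp
next
  case False
  then have "c = int (nat c)" using assms by simp
  also have "\<dots> \<le> rank BV Bm (\<lambda>y. int (nat c) * (ind u y + ind v y))"
    by (intro rank_multiple_ge[OF u_in_BV v_in_BV ex_mirror_vertex])
  also have "(\<lambda>y. int (nat c) * (ind u y + ind v y)) = (\<lambda>x. c * ind u x + c * ind v x)"
    using \<open>c = int (nat c)\<close> by (simp add: fun_eq_iff algebra_simps)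
  finally show ?thesis .
qed

lemma Delta_reversal_pos:
  assumes b: "0 \<le> b" "b \<le> int g"
  shows "1 \<le> Delta BV Bm u v (twist u v (\<lambda>x. int g * ind v x) (int g - b) (-b))"
proof -
  define c where "c = int g - b"
  have twist_eq: "twist u v (twist u v (\<lambda>x. int g * ind v x) c (-b)) a' b'
      = (\<lambda>x. (c + a') * ind u x + (c + b') * ind v x)" for a' b'
    by (simp add: twist_def c_def fun_eq_iff algebra_simps)
  have "twist u v (\<lambda>x. int g * ind v x) c (-b) = (\<lambda>x. c * ind u x + c * ind v x)"
    by (simp add: twist_def c_def fun_eq_iff algebra_simps)
  then have "c \<le> rank BV Bm (twist u v (\<lambda>x. int g * ind v x) c (-b))"
    using rank_multiple_u_v_ge[of c] b by (simp add: c_def)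
  moreover have "c - 1 \<le> rank BV Bm (\<lambda>x. (c - 1) * ind u x + (c - 1) * ind v x)"
    using rank_multiple_u_v_ge[of "c - 1"] b by (simp add: c_def)
  moreover have "rank BV Bm (\<lambda>x. (c - 1) * ind u x + c * ind v x) \<le> c - 1"
    using rank_hub_deficient_le[of v u c] b by (simp add: c_def add.commute)
  moreover have "rank BV Bm (\<lambda>x. c * ind u x + (c - 1) * ind v x) \<le> c - 1"
    using rank_hub_deficient_le[of u v c] b by (simp add: c_def)
  ultimately show ?thesis
    unfolding Delta_def c_def[symmetric] twist_eq by (simp add: algebra_simps)
qed

lemma torsion_order_equiv:
  "1 \<le> torsion_order BV Bm u v \<and>
   lin_equiv BV Bm (\<lambda>x. int (torsion_order BV Bm u v) * ind u x)
                   (\<lambda>x. int (torsion_order BV Bm u v) * ind v x)"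
  unfolding torsion_order_def
  by (rule LeastI[of _ torsion_bound]) (use torsion_bound_pos torsion_bound_equiv in auto)

end

section \<open>Inversions of periodic bijections\<close>

lemma card_increasing_pairs:
  "card {(a::int, b::int). 0 \<le> a \<and> a < b \<and> b \<le> int n} = (n + 1) choose 2"
proof (induction n)
  case 0
  have "{(a::int, b::int). 0 \<le> a \<and> a < b \<and> b \<le> int 0} = {}" by auto
  then show ?case by (simp only:) (simp add: numeral_2_eq_2)
next
  case (Suc n)
  let ?A = "{(a::int, b::int). 0 \<le> a \<and> a < b \<and> b \<le> int n}"
  let ?B = "(\<lambda>a. (a, int n + 1)) ` {0..int n}"
  have split: "{(a::int, b::int). 0 \<le> a \<and> a < b \<and> b \<le> int (Suc n)} = ?A \<union> ?B"
    by (auto simp: image_iff)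
  have "finite ?A" by (rule finite_subset[of _ "{0..int n} \<times> {0..int n}"]) auto
  moreover have "card ?B = Suc n" by (subst card_image) (auto intro: inj_onI)
  ultimately have "card (?A \<union> ?B) = (n + 1 choose 2) + Suc n"
    using Suc by (subst card_Un_disjoint) auto
  also have "\<dots> = Suc n + 1 choose 2" by (simp add: numeral_2_eq_2)
  finally show ?case unfolding split .
qed

lemma period_gt_if_reversal:
  fixes t :: "int \<Rightarrow> int" and k g :: nat
  assumes per: "\<And>b. t (b + int k) = t b + int k"
    and rev: "\<And>b. 0 \<le> b \<Longrightarrow> b \<le> int g \<Longrightarrow> t b = int g - b" and k: "1 \<le> k"
  shows "g < k"
proof (rule ccontr)
  assume "\<not> g < k"
  then have "t (0 + int k) = int g - int k" using rev by simp
  moreover have "t (0 + int k) = t 0 + int k" by (rule per)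
  ultimately show False using rev[of 0] k by simp
qed

lemma periodic_shift:
  fixes t :: "int \<Rightarrow> int"
  assumes per: "\<And>b. t (b + int k) = t b + int k"
  shows "t (b + q * int k) = t b + q * int k"
proof -
  have nat_shift: "t (b + int j * int k) = t b + int j * int k" for b j
  proof (induction j)
    case (Suc j)
    have "t (b + int (Suc j) * int k) = t ((b + int j * int k) + int k)" by (simp add: algebra_simps)
    then show ?case using Suc per[of "b + int j * int k"] by (simp add: algebra_simps)
  qed simp
  show ?thesis
  proof (cases "0 \<le> q")
    case True then show ?thesis using nat_shift[of b "nat q"] by simp
  next
    case False
    have "b + q * int k + int (nat (- q)) * int k = b" using False by simp
    then show ?thesis using nat_shift[of "b + q * int k" "nat (- q)"] False by simp
  qed
qed

lemma bounded_displacement_if_periodic: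
  fixes t :: "int \<Rightarrow> int"
  assumes per: "\<And>b. t (b + int k) = t b + int k" and k: "0 < k"
  obtains M where "\<And>b. \<bar>t b - b\<bar> \<le> M"
proof
  fix b
  have "t (b mod int k + b div int k * int k) = t (b mod int k) + b div int k * int k"
    by (rule periodic_shift[where t=t and k=k, OF per])
  then have "t b = t (b mod int k) + b div int k * int k" by (simp only: mod_div_mult_eq)
  then have "t b - b = t (b mod int k) - b mod int k" using mod_div_mult_eq[of b "int k"] by linarith
  moreover have "b mod int k \<in> {0..<int k}" using k by simp
  ultimately show "\<bar>t b - b\<bar> \<le> Max ((\<lambda>j. \<bar>t j - j\<bar>) ` {0..<int k})" by simp
qed

lemma equiv_k_equiv: "equiv (inversions t) (k_equiv k t)"
proof (rule equivI)
  show "k_equiv k t \<subseteq> inversions t \<times> inversions t"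
    unfolding k_equiv_def by auto
  show "refl_on (inversions t) (k_equiv k t)"
    unfolding refl_on_def k_equiv_def by auto
  show "sym (k_equiv k t)"
  proof (rule symI)
    fix x y assume "(x, y) \<in> k_equiv k t"
    then show "(y, x) \<in> k_equiv k t"
      unfolding k_equiv_def by (cases x, cases y) (auto simp: dvd_diff_commute)
  qed
  show "trans (k_equiv k t)"
  proof (rule transI)
    fix x y z assume xy: "(x, y) \<in> k_equiv k t" and yz: "(y, z) \<in> k_equiv k t"
    obtain a b a' b' a'' b'' where p: "x = (a, b)" "y = (a', b')" "z = (a'', b'')"
      by (cases x, cases y, cases z)
    have "int k dvd a - a'" "int k dvd a' - a''" using xy yz unfolding p k_equiv_def by auto
    from dvd_add[OF this] have "int k dvd a - a''" by simp
    then show "(x, z) \<in> k_equiv k t" using xy yz unfolding p k_equiv_def by auto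
  qed
qed

text \<open>Shifting by a multiple of k moves every inversion to one with 0 \<le> a < k, and b - a is
bounded by twice the displacement of the periodic bijection.\<close>

lemma finite_inversion_classes:
  fixes t :: "int \<Rightarrow> int"
  assumes per: "\<And>b. t (b + int k) = t b + int k" and k: "0 < k"
  shows "finite (inversions t // k_equiv k t)"
proof -
  obtain M where M: "\<And>b. \<bar>t b - b\<bar> \<le> M"
    using bounded_displacement_if_periodic[where t=t and k=k, OF per k] by blast
  define J where "J = {0..<int k} \<times> {0..int k + 2 * M}"
  have "inversions t // k_equiv k t \<subseteq> (\<lambda>x. k_equiv k t `` {x}) ` J"
  proof
    fix X assume "X \<in> inversions t // k_equiv k t"
    then obtain a b where ab: "(a, b) \<in> inversions t" "X = k_equiv k t `` {(a, b)}"
      unfolding quotient_def by auto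
    define q where "q = a div int k"
    have inv: "a < b" "t b < t a" using ab unfolding inversions_def by auto
    have shifted: "(a - q * int k, b - q * int k) \<in> inversions t"
      using inv periodic_shift[where t=t and k=k, OF per, of a "- q"]
        periodic_shift[where t=t and k=k, OF per, of b "- q"]
      unfolding inversions_def by simp
    have "b - a < 2 * M" using inv M[of a] M[of b] by linarith
    moreover have "a - q * int k = a mod int k" unfolding q_def by (simp add: minus_div_mult_eq_mod)
    moreover have "0 \<le> a mod int k" "a mod int k < int k" using k by simp_all
    ultimately have "0 \<le> a - q * int k \<and> a - q * int k < int k \<and>
        0 \<le> b - q * int k \<and> b - q * int k \<le> int k + 2 * M"
      using inv by linarith
    then have "(a - q * int k, b - q * int k) \<in> J" unfolding J_def by simp
    moreover have "((a, b), (a - q * int k, b - q * int k)) \<in> k_equiv k t"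
      using ab(1) shifted unfolding k_equiv_def by auto
    then have "X = k_equiv k t `` {(a - q * int k, b - q * int k)}"
      using ab(2) equiv_class_eq[OF equiv_k_equiv] by simp
    ultimately show "X \<in> (\<lambda>x. k_equiv k t `` {x}) ` J" by blast
  qed
  moreover have "finite J" unfolding J_def by simp
  ultimately show ?thesis by (meson finite_imageI finite_subset)
qed

lemma inv_k_ge_if_reversal:
  fixes t :: "int \<Rightarrow> int" and k g :: nat
  assumes per: "\<And>b. t (b + int k) = t b + int k"
    and rev: "\<And>b. 0 \<le> b \<Longrightarrow> b \<le> int g \<Longrightarrow> t b = int g - b" and gk: "g < k"
  shows "(g + 1) choose 2 \<le> inv_k k t"
proof -
  define P where "P = {(a::int, b::int). 0 \<le> a \<and> a < b \<and> b \<le> int g}"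
  have P_inv: "P \<subseteq> inversions t" unfolding P_def inversions_def using rev by auto
  have "inj_on (\<lambda>x. k_equiv k t `` {x}) P"
  proof (rule inj_onI)
    fix x y assume xy: "x \<in> P" "y \<in> P" "k_equiv k t `` {x} = k_equiv k t `` {y}"
    then have "(x, y) \<in> k_equiv k t" using eq_equiv_class_iff[OF equiv_k_equiv] P_inv by blast
    then obtain a b a' b' where e: "x = (a, b)" "y = (a', b')" "a - a' = b - b'" "int k dvd (a - a')"
      unfolding k_equiv_def by auto
    have "\<bar>a - a'\<bar> < int k" using xy(1,2) e gk unfolding P_def by auto
    then have "a = a'" using e(4) dvd_imp_le_int[of "a - a'" "int k"] by fastforce
    then show "x = y" using e by simp
  qed
  then have "card P = card ((\<lambda>x. k_equiv k t `` {x}) ` P)" by (rule card_image[symmetric])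
  also have "\<dots> \<le> inv_k k t"
    unfolding inv_k_def using finite_inversion_classes[where t=t and k=k, OF per] gk P_inv
    by (intro card_mono) (auto simp: quotient_def)
  finally show ?thesis unfolding P_def card_increasing_pairs .
qed

theorem mainTheorem19:
  fixes g :: nat and ns :: "nat \<Rightarrow> nat"
  assumes "g \<ge> 2"
    and "\<forall>\<alpha>\<le>g. ns \<alpha> > 0"
    and "submodular (banana_V g ns) (banana_m g ns) (0, 0) (0, ns 0)
           (\<lambda>x. int g * ind (0, ns 0) x)"
  shows "(\<forall>b. 0 \<le> b \<and> b \<le> int g \<longrightarrow>
            trans_perm (banana_V g ns) (banana_m g ns) (0, 0) (0, ns 0)
              (\<lambda>x. int g * ind (0, ns 0) x) b = int g - b)
       \<and> torsion_order (banana_V g ns) (banana_m g ns) (0, 0) (0, ns 0) \<ge> g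
       \<and> inv_k (torsion_order (banana_V g ns) (banana_m g ns) (0, 0) (0, ns 0))
               (trans_perm (banana_V g ns) (banana_m g ns) (0, 0) (0, ns 0)
                  (\<lambda>x. int g * ind (0, ns 0) x))
           \<ge> (g + 1) choose 2"
proof -
  interpret banana g ns using assms(2) by unfold_locales auto
  define k where "k = torsion_order (banana_V g ns) (banana_m g ns) (0, 0) (0, ns 0)"
  obtain C where "\<forall>E. C \<le> degree (banana_V g ns) E \<longrightarrow>
      (\<exists>F. effective (banana_V g ns) F \<and> lin_equiv (banana_V g ns) (banana_m g ns) E F)"
    using ex_effective_threshold by blast
  then interpret T: submodular_twice_marked "banana_V g ns" "banana_m g ns" "(0, 0)" "(0, ns 0)"
      k C "\<lambda>x. int g * ind (0, ns 0) x"
    using torsion_order_equiv assms(3) u_in_BV v_in_BV unfolding k_def by unfold_locales auto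
  have reversal: "T.tau b = int g - b" if "0 \<le> b" "b \<le> int g" for b
    using T.tau_eq_if_Delta_pos Delta_reversal_pos[OF that] by blast
  have "g < k"
    using period_gt_if_reversal[OF T.tau_periodic reversal] torsion_order_equiv
    unfolding k_def by blast
  moreover have "(g + 1) choose 2 \<le> inv_k k T.tau"
    using inv_k_ge_if_reversal[OF T.tau_periodic reversal \<open>g < k\<close>] .
  ultimately show ?thesis
    using T.trans_perm_eq_tau reversal unfolding k_def by auto
qed

end
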